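(* Let $m>2$ be an integer and, in formal (or analytic) coordinates $(\theta,x_1,\dots,x_{2n})$ on $(\mathbb{K}^{2n+1},O)$, let $\alpha=d(\theta^m-x_1\theta)+\gamma$, where $\gamma=\sum_{i=1}^{2n}g_i(x)\,dx_i$ has coefficients independent of $\theta$ and $d\gamma$ is a symplectic form in the variables $x_1,\dots,x_{2n}$. Let $X=f_0\,\partial/\partial\theta+\sum_{i=1}^{2n}f_i\,\partial/\partial x_i$ be a formal (or analytic) vector field with $\mathcal{L}_X\alpha=0$. Then $f_0=f_1=0$.
   Context: $\mathbb{K}=\mathbb{R}$ or $\mathbb{C}$. *)

theory Defs
  imports Complex_Main "HOL-Library.Poly_Mapping"
begin

text \<open>Formal power series over a field in the variables indexed by natural numbers:
  a series is its coefficient function on multi-indices (finitely supported exponent vectors).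
  Variable 0 is theta, variables 1..2n are x_1..x_2n.\<close>

type_synonym 'a mps = "(nat \<Rightarrow>\<^sub>0 nat) \<Rightarrow> 'a"

definition mps_const :: "'a::zero \<Rightarrow> 'a mps" where
  "mps_const c = (\<lambda>a. if a = 0 then c else 0)"

definition mps_var :: "nat \<Rightarrow> 'a::{zero,one} mps" where
  "mps_var i = (\<lambda>a. if a = Poly_Mapping.single i 1 then 1 else 0)"

definition mps_add :: "'a::plus mps \<Rightarrow> 'a mps \<Rightarrow> 'a mps" where
  "mps_add p q = (\<lambda>a. p a + q a)"

definition mps_diff :: "'a::minus mps \<Rightarrow> 'a mps \<Rightarrow> 'a mps" where
  "mps_diff p q = (\<lambda>a. p a - q a)"

text \<open>Cauchy product; the index set is finite.\<close>
definition mps_mul :: "'a::comm_semiring_1 mps \<Rightarrow> 'a mps \<Rightarrow> 'a mps" where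
  "mps_mul p q = (\<lambda>a. \<Sum>(b, c)\<in>{(b, c). b + c = a}. p b * q c)"

primrec mps_pow :: "'a::comm_semiring_1 mps \<Rightarrow> nat \<Rightarrow> 'a mps" where
  "mps_pow p 0 = mps_const 1"
| "mps_pow p (Suc k) = mps_mul p (mps_pow p k)"

definition mps_deriv :: "nat \<Rightarrow> 'a::comm_semiring_1 mps \<Rightarrow> 'a mps" where
  "mps_deriv i p = (\<lambda>a. of_nat (Poly_Mapping.lookup a i + 1) * p (a + Poly_Mapping.single i 1))"

definition mps_vars :: "nat set \<Rightarrow> 'a::zero mps \<Rightarrow> bool" where
  "mps_vars V p \<longleftrightarrow> (\<forall>a. p a \<noteq> 0 \<longrightarrow> Poly_Mapping.keys a \<subseteq> V)"

text \<open>1-forms are coefficient families (index j is the coefficient of dy_j),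
  2-forms are families w i j (coefficient of dy_i \<and> dy_j, skew).\<close>

definition mps_d0 :: "'a::comm_semiring_1 mps \<Rightarrow> nat \<Rightarrow> 'a mps" where
  "mps_d0 h = (\<lambda>j. mps_deriv j h)"

definition mps_d1 :: "(nat \<Rightarrow> 'a::comm_ring_1 mps) \<Rightarrow> nat \<Rightarrow> nat \<Rightarrow> 'a mps" where
  "mps_d1 \<gamma> = (\<lambda>i j. mps_diff (mps_deriv i (\<gamma> j)) (mps_deriv j (\<gamma> i)))"

text \<open>A (formal) 2-form in the variables I is nondegenerate iff its value at the origin
  (constant terms) is a nondegenerate bilinear form; equivalently its coefficient matrix is
  invertible over the power series ring.\<close>
definition nondegenerate_2form :: "nat set \<Rightarrow> (nat \<Rightarrow> nat \<Rightarrow> 'a::comm_ring_1 mps) \<Rightarrow> bool" where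
  "nondegenerate_2form I w \<longleftrightarrow>
     (\<forall>v::nat \<Rightarrow> 'a. (\<forall>j\<in>I. (\<Sum>i\<in>I. w i j 0 * v i) = 0) \<longrightarrow> (\<forall>i\<in>I. v i = 0))"

definition lie_deriv_1form ::
  "nat set \<Rightarrow> (nat \<Rightarrow> 'a::comm_semiring_1 mps) \<Rightarrow> (nat \<Rightarrow> 'a mps) \<Rightarrow> nat \<Rightarrow> 'a mps" where
  "lie_deriv_1form I X w = (\<lambda>j a. \<Sum>k\<in>I.
       mps_mul (X k) (mps_deriv k (w j)) a + mps_mul (w k) (mps_deriv j (X k)) a)"

end

theory Submission
  imports Defs
begin

text \<open>
  Write \<open>\<alpha> = dP + \<gamma>\<close> with \<open>P = \<theta>\<^sup>m - x\<^sub>1 \<theta>\<close>. By Cartan's formula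
  \<open>L\<^sub>X \<alpha> = i\<^sub>X d\<alpha> + d(i\<^sub>X \<alpha>)\<close>, where \<open>d\<alpha> = d\<gamma>\<close> has no \<open>d\<theta>\<close> part, the \<open>\<theta>\<close>-component of
  \<open>L\<^sub>X \<alpha> = 0\<close> says that \<open>H = i\<^sub>X \<alpha>\<close> does not depend on \<open>\<theta>\<close>, and the \<open>x\<close>-components say
  \<open>i\<^sub>X d\<gamma> + d\<^sub>x H = 0\<close>. Differentiating the latter in \<open>\<theta>\<close>, and using that \<open>d\<gamma>\<close> is
  \<open>\<theta>\<close>-independent and nondegenerate, shows that \<open>f\<^sub>1, \<dots>, f\<^sub>2\<^sub>n\<close> are \<open>\<theta>\<close>-independent.
  Hence \<open>0 = \<partial>\<^sub>\<theta> H = \<partial>\<^sub>\<theta>((m \<theta>\<^sup>m\<^sup>-\<^sup>1 - x\<^sub>1) f\<^sub>0) - f\<^sub>1\<close>, so \<open>(m \<theta>\<^sup>m\<^sup>-\<^sup>1 - x\<^sub>1) f\<^sub>0\<close> is affine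
  in \<open>\<theta>\<close>. As \<open>m - 1 \<ge> 2\<close>, its coefficient at \<open>\<theta>\<^sup>m\<^sup>-\<^sup>1\<close> times any monomial \<open>y\<^sup>b\<close> vanishes;
  this coefficient is \<open>m f\<^sub>0[b] - f\<^sub>0[b \<theta>\<^sup>m\<^sup>-\<^sup>1 / x\<^sub>1]\<close>, so induction on the \<open>x\<^sub>1\<close>-degree of \<open>b\<close>
  gives \<open>f\<^sub>0 = 0\<close>, and then \<open>f\<^sub>1 = 0\<close>.
\<close>

section \<open>Exponent vectors\<close>

definition total_degree :: "(nat \<Rightarrow>\<^sub>0 nat) \<Rightarrow> nat" where
  "total_degree a = (\<Sum>i\<in>Poly_Mapping.keys a. Poly_Mapping.lookup a i)"

lemma total_degree_eq_sum:
  assumes "finite K" and "Poly_Mapping.keys a \<subseteq> K"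
  shows "total_degree a = (\<Sum>i\<in>K. Poly_Mapping.lookup a i)"
  unfolding total_degree_def using assms
  by (intro sum.mono_neutral_left) (auto simp: Poly_Mapping.in_keys_iff)

lemma total_degree_add: "total_degree (a + b) = total_degree a + total_degree b"
proof -
  let ?K = "Poly_Mapping.keys a \<union> Poly_Mapping.keys b"
  have "Poly_Mapping.keys (a + b) \<subseteq> ?K"
    by (rule keys_add)
  then show ?thesis
    by (simp add: total_degree_eq_sum[of ?K] lookup_add sum.distrib)
qed

lemma total_degree_eq_0_iff: "total_degree a = 0 \<longleftrightarrow> a = 0"
  by (auto simp: total_degree_def poly_mapping_eq_iff fun_eq_iff Poly_Mapping.in_keys_iff)

lemma lookup_le_total_degree: "Poly_Mapping.lookup a i \<le> total_degree a"
  by (cases "i \<in> Poly_Mapping.keys a")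
    (auto simp: total_degree_def Poly_Mapping.in_keys_iff intro: member_le_sum)

lemma finite_additive_decompositions: "finite {(b, c). b + c = (a :: nat \<Rightarrow>\<^sub>0 nat)}"
proof -
  let ?S = "{b. \<exists>c. b + c = a}"
  have "Poly_Mapping.lookup ` ?S \<subseteq> {h. \<forall>i. (i \<in> Poly_Mapping.keys a \<longrightarrow> h i \<in> {..total_degree a})
                                         \<and> (i \<notin> Poly_Mapping.keys a \<longrightarrow> h i = 0)}"
  proof clarify
    fix b c i
    assume "a = b + c"
    then have "Poly_Mapping.lookup b i \<le> Poly_Mapping.lookup (b + c) i"
      by (simp add: lookup_add)
    then show "(i \<in> Poly_Mapping.keys (b + c) \<longrightarrow> Poly_Mapping.lookup b i \<in> {..total_degree (b + c)})
             \<and> (i \<notin> Poly_Mapping.keys (b + c) \<longrightarrow> Poly_Mapping.lookup b i = 0)"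
      using lookup_le_total_degree[of "b + c" i] by (simp add: Poly_Mapping.in_keys_iff)
  qed
  then have "finite (Poly_Mapping.lookup ` ?S)"
    by (rule finite_subset) (rule finite_set_of_finite_funs; simp)
  then have "finite ?S"
    by (rule finite_imageD) (rule inj_onI, rule poly_mapping_eqI, simp)
  moreover have "{(b, c). b + c = a} \<subseteq> ?S \<times> ?S"
    by (auto, metis add.commute)
  ultimately show ?thesis
    by (blast intro: finite_subset)
qed

lemma diff_single_add_single:
  "1 \<le> Poly_Mapping.lookup b i \<Longrightarrow> b - Poly_Mapping.single i 1 + Poly_Mapping.single i 1 = (b :: 'a \<Rightarrow>\<^sub>0 nat)"
  by (rule poly_mapping_eqI) (auto simp: lookup_add lookup_minus lookup_single when_def)

section \<open>Products and monomials\<close>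

definition mps_monom :: "(nat \<Rightarrow>\<^sub>0 nat) \<Rightarrow> 'a::zero \<Rightarrow> 'a mps" where
  "mps_monom e c = (\<lambda>a. if a = e then c else 0)"

lemma mps_const_eq_monom: "mps_const c = mps_monom 0 c"
  by (simp add: mps_const_def mps_monom_def)

lemma mps_var_eq_monom: "mps_var i = mps_monom (Poly_Mapping.single i 1) 1"
  by (simp add: mps_var_def mps_monom_def)

lemma mps_monom_0 [simp]: "mps_monom e 0 = (\<lambda>_. 0)"
  by (simp add: mps_monom_def)

lemma mps_const_0 [simp]: "mps_const 0 = (\<lambda>_. 0)"
  by (simp add: mps_const_eq_monom)

lemma mps_mul_commute: "mps_mul p q = mps_mul q p"
  unfolding mps_mul_def
  by (intro ext sum.reindex_bij_witness[of _ prod.swap prod.swap]) (auto simp: add.commute mult.commute)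

lemma mps_mul_0_left [simp]: "mps_mul (\<lambda>_. 0) q = (\<lambda>_. 0)"
  by (simp add: mps_mul_def)

lemma mps_mul_0_right [simp]: "mps_mul p (\<lambda>_. 0) = (\<lambda>_. 0)"
  by (simp add: mps_mul_def)

lemma mps_mul_diff_left:
  fixes p :: "'a::comm_ring_1 mps"
  shows "mps_mul (mps_diff p q) r = mps_diff (mps_mul p r) (mps_mul q r)"
  by (simp add: mps_mul_def mps_diff_def left_diff_distrib sum_subtractf case_prod_beta)

lemma mps_mul_diff_right:
  fixes p :: "'a::comm_ring_1 mps"
  shows "mps_mul p (mps_diff q r) = mps_diff (mps_mul p q) (mps_mul p r)"
  by (simp add: mps_mul_def mps_diff_def right_diff_distrib sum_subtractf case_prod_beta)

lemma mps_mul_monom_left: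
  "mps_mul (mps_monom e c) q a = (if \<exists>b. a = e + b then c * q (a - e) else 0)"
proof -
  have "mps_mul (mps_monom e c) q a = (\<Sum>p\<in>{(b, d). b + d = a}. if fst p = e then c * q (snd p) else 0)"
    unfolding mps_mul_def mps_monom_def by (rule sum.cong) auto
  also have "\<dots> = (\<Sum>p\<in>{p\<in>{(b, d). b + d = a}. fst p = e}. c * q (snd p))"
    by (rule sum.inter_filter[symmetric, OF finite_additive_decompositions])
  also have "{p\<in>{(b, d). b + d = a}. fst p = e} = (if \<exists>b. a = e + b then {(e, a - e)} else {})"
    by auto
  finally show ?thesis
    by auto
qed

lemma mps_mul_monom_monom:
  "mps_mul (mps_monom e c) (mps_monom e' c') = mps_monom (e + e') (c * c')"
  by (rule ext, subst mps_mul_monom_left) (auto simp: mps_monom_def)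

lemma mps_pow_var: "mps_pow (mps_var i) k = mps_monom (Poly_Mapping.single i k) 1"
  by (induction k) (simp_all add: mps_const_eq_monom mps_var_eq_monom mps_mul_monom_monom
      flip: single_add)

section \<open>Partial derivatives\<close>

lemma mps_mul_deriv_left_eq_sum:
  "mps_mul (mps_deriv i p) q a
     = (\<Sum>(b, c)\<in>{(b, c). b + c = a + Poly_Mapping.single i 1}. of_nat (Poly_Mapping.lookup b i) * (p b * q c))"
proof -
  let ?e = "Poly_Mapping.single i (1::nat)"
  let ?S = "{(b, c). b + c = a}" and ?T = "{(b, c). b + c = a + ?e}"
  let ?shift = "\<lambda>(b, c). (b + ?e, c)"
  let ?g = "\<lambda>(b, c). of_nat (Poly_Mapping.lookup b i) * (p b * q c)"
  have "?shift ` ?S \<subseteq> ?T"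
    by (auto simp: ac_simps)
  moreover have "?g x = 0" if "x \<in> ?T - ?shift ` ?S" for x
  proof (cases x)
    case (Pair b c)
    show ?thesis
    proof (rule ccontr)
      assume "?g x \<noteq> 0"
      then have "b - ?e + ?e = b"
        using Pair by (intro diff_single_add_single) (cases "Poly_Mapping.lookup b i"; auto)
      moreover have "b + c = a + ?e"
        using that Pair by auto
      ultimately have "b - ?e + c = a"
        by (metis add.commute add.left_commute add_right_cancel)
      then have "x \<in> ?shift ` ?S"
        using Pair \<open>b - ?e + ?e = b\<close> by (auto intro!: image_eqI[of _ _ "(b - ?e, c)"])
      then show False
        using that by blast
    qed
  qed
  ultimately have "sum ?g ?T = sum ?g (?shift ` ?S)"
    by (intro sum.mono_neutral_right finite_additive_decompositions) auto
  also have "\<dots> = sum (?g \<circ> ?shift) ?S"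
    by (rule sum.reindex) (auto simp: inj_on_def)
  also have "\<dots> = mps_mul (mps_deriv i p) q a"
    unfolding mps_mul_def mps_deriv_def
    by (rule sum.cong) (auto simp: lookup_add mult.assoc)
  finally show ?thesis
    by simp
qed

lemma mps_deriv_mul:
  "mps_deriv i (mps_mul p q) = mps_add (mps_mul (mps_deriv i p) q) (mps_mul p (mps_deriv i q))"
proof (rule ext)
  fix a :: "nat \<Rightarrow>\<^sub>0 nat"
  let ?T = "{(b, c). b + c = a + Poly_Mapping.single i 1}"
  let ?lb = "\<lambda>b. of_nat (Poly_Mapping.lookup b i)"
  have swap: "(\<Sum>(b, c)\<in>?T. ?lb c * (p b * q c)) = (\<Sum>(b, c)\<in>?T. ?lb b * (q b * p c))"
    by (rule sum.reindex_bij_witness[of _ prod.swap prod.swap]) (auto simp: add.commute mult.commute)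
  have "mps_deriv i (mps_mul p q) a = (\<Sum>(b, c)\<in>?T. (?lb b + ?lb c) * (p b * q c))"
    unfolding mps_deriv_def mps_mul_def sum_distrib_left
    by (rule sum.cong) (auto simp: lookup_add simp flip: of_nat_add dest: arg_cong[of _ _ "\<lambda>b. Poly_Mapping.lookup b i"])
  also have "\<dots> = (\<Sum>(b, c)\<in>?T. ?lb b * (p b * q c)) + (\<Sum>(b, c)\<in>?T. ?lb c * (p b * q c))"
    by (simp add: distrib_right sum.distrib case_prod_beta)
  also have "\<dots> = mps_mul (mps_deriv i p) q a + mps_mul p (mps_deriv i q) a"
    unfolding swap by (simp add: mps_mul_deriv_left_eq_sum mps_mul_commute[of p])
  finally show "mps_deriv i (mps_mul p q) a = mps_add (mps_mul (mps_deriv i p) q) (mps_mul p (mps_deriv i q)) a"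
    by (simp add: mps_add_def)
qed

lemma mps_deriv_add: "mps_deriv i (mps_add p q) = mps_add (mps_deriv i p) (mps_deriv i q)"
  by (simp add: mps_deriv_def mps_add_def distrib_left)

lemma mps_deriv_diff:
  fixes p :: "'a::comm_ring_1 mps"
  shows "mps_deriv i (mps_diff p q) = mps_diff (mps_deriv i p) (mps_deriv i q)"
  by (simp add: mps_deriv_def mps_diff_def right_diff_distrib)

lemma mps_deriv_sum: "mps_deriv i (\<lambda>a. \<Sum>k\<in>K. F k a) = (\<lambda>a. \<Sum>k\<in>K. mps_deriv i (F k) a)"
  by (simp add: mps_deriv_def sum_distrib_left)

lemma mps_deriv_0 [simp]: "mps_deriv i (\<lambda>_. 0) = (\<lambda>_. 0)"
  by (simp add: mps_deriv_def)

lemma mps_deriv_commute: "mps_deriv i (mps_deriv j p) = mps_deriv j (mps_deriv i p)"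
  by (cases "i = j") (auto simp: mps_deriv_def lookup_add lookup_single ac_simps)

lemma mps_deriv_monom:
  "mps_deriv i (mps_monom e c)
     = (if i \<in> Poly_Mapping.keys e
        then mps_monom (e - Poly_Mapping.single i 1) (of_nat (Poly_Mapping.lookup e i) * c)
        else (\<lambda>_. 0))"
proof (rule ext)
  fix a
  let ?e = "Poly_Mapping.single i (1::nat)"
  show "mps_deriv i (mps_monom e c) a = (if i \<in> Poly_Mapping.keys e
        then mps_monom (e - ?e) (of_nat (Poly_Mapping.lookup e i) * c) else (\<lambda>_. 0)) a"
  proof (cases "i \<in> Poly_Mapping.keys e")
    case True
    then have "e - ?e + ?e = e"
      by (intro diff_single_add_single) (simp add: Poly_Mapping.in_keys_iff)
    then have "a + ?e = e \<longleftrightarrow> a = e - ?e"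
      and "of_nat (Poly_Mapping.lookup (e - ?e) i + 1) = (of_nat (Poly_Mapping.lookup e i) :: 'a)"
      by (metis add_right_cancel, metis lookup_add lookup_single_eq)
    with True show ?thesis
      by (auto simp: mps_deriv_def mps_monom_def)
  next
    case False
    then have "a + ?e \<noteq> e"
      by (auto simp: Poly_Mapping.in_keys_iff lookup_add dest: arg_cong[of _ _ "\<lambda>b. Poly_Mapping.lookup b i"])
    with False show ?thesis
      by (simp add: mps_deriv_def mps_monom_def)
  qed
qed

lemma mps_deriv_eq_0_imp_coeff_eq_0:
  fixes p :: "'a::{comm_semiring_1, semiring_char_0, semiring_no_zero_divisors} mps"
  assumes "mps_deriv i p = (\<lambda>_. 0)"
  shows "p (a + Poly_Mapping.single i 1) = 0"
  using fun_cong[OF assms, of a] unfolding mps_deriv_def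
  by (metis Suc_eq_plus1 mult_eq_0_iff of_nat_neq_0)

lemma mps_deriv_deriv_eq_0_imp_coeff_eq_0:
  fixes p :: "'a::{comm_semiring_1, semiring_char_0, semiring_no_zero_divisors} mps"
  assumes "mps_deriv i (mps_deriv i p) = (\<lambda>_. 0)" and "2 \<le> Poly_Mapping.lookup a i"
  shows "p a = 0"
proof -
  let ?e = "Poly_Mapping.single i (1::nat)"
  have "a - ?e + ?e = a" and "a - ?e - ?e + ?e = a - ?e"
    using assms(2) by (intro diff_single_add_single; simp add: lookup_minus)+
  then have "a = a - ?e - ?e + ?e + ?e"
    by simp
  moreover have "mps_deriv i p (a - ?e - ?e + ?e) = 0"
    by (rule mps_deriv_eq_0_imp_coeff_eq_0[OF assms(1)])
  ultimately show ?thesis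
    by (metis mps_deriv_def mult_eq_0_iff of_nat_eq_0_iff add_eq_0_iff_both_eq_0 one_neq_zero)
qed

lemma mps_vars_imp_deriv_eq_0:
  assumes "mps_vars V p" and "i \<notin> V"
  shows "mps_deriv i p = (\<lambda>_. 0)"
proof (rule ext)
  fix a :: "nat \<Rightarrow>\<^sub>0 nat"
  have "i \<in> Poly_Mapping.keys (a + Poly_Mapping.single i 1)"
    by (simp add: Poly_Mapping.in_keys_iff lookup_add)
  with assms have "p (a + Poly_Mapping.single i 1) = 0"
    unfolding mps_vars_def by blast
  then show "mps_deriv i p a = 0"
    by (simp add: mps_deriv_def)
qed

section \<open>Forms and Lie derivatives\<close>

lemma mps_d1_add_d0: "mps_d1 (\<lambda>i. mps_add (mps_d0 P i) (G i)) = mps_d1 G"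
  unfolding mps_d1_def mps_d0_def mps_deriv_add
  by (intro ext) (simp add: mps_diff_def mps_add_def mps_deriv_commute)

lemma lie_deriv_1form_Cartan:
  "lie_deriv_1form I X w j a
     = (\<Sum>k\<in>I. mps_mul (X k) (mps_d1 w k j) a) + mps_deriv j (\<lambda>a. \<Sum>k\<in>I. mps_mul (w k) (X k) a) a"
proof -
  have "mps_mul (X k) (mps_d1 w k j) a + mps_deriv j (mps_mul (w k) (X k)) a
      = mps_mul (X k) (mps_deriv k (w j)) a + mps_mul (w k) (mps_deriv j (X k)) a" for k
    unfolding mps_d1_def mps_mul_diff_right mps_deriv_mul
    by (simp add: mps_diff_def mps_add_def mps_mul_commute[of "X k"])
  then show ?thesis
    by (simp add: lie_deriv_1form_def mps_deriv_sum flip: sum.distrib)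
qed

lemma mps_mul_eq_lowest_coeff:
  assumes "\<forall>b. total_degree b < total_degree a \<longrightarrow> p b = 0"
  shows "mps_mul p q a = p a * q 0"
proof -
  have "p b * q c = 0" if "b + c = a" and "(b, c) \<noteq> (a, 0)" for b c
  proof -
    have "c \<noteq> 0"
      using that by auto
    then have "total_degree b < total_degree a"
      using that(1) by (auto simp: total_degree_add simp flip: total_degree_eq_0_iff)
    then show ?thesis
      using assms by simp
  qed
  then have "mps_mul p q a = (\<Sum>(b, c)\<in>{(a, 0)}. p b * q c)"
    unfolding mps_mul_def by (intro sum.mono_neutral_right finite_additive_decompositions) auto
  then show ?thesis
    by simp
qed

text \<open>Nondegeneracy is only required of the constant terms; induction on the total degree of
  the coefficient lifts it to series.\<close>

lemma nondegenerate_2form_kernel: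
  fixes v :: "nat \<Rightarrow> 'a::comm_ring_1 mps"
  assumes "nondegenerate_2form I w"
    and "\<forall>j\<in>I. (\<lambda>a. \<Sum>k\<in>I. mps_mul (v k) (w k j) a) = (\<lambda>_. 0)"
  shows "\<forall>k\<in>I. v k = (\<lambda>_. 0)"
proof -
  have "\<forall>k\<in>I. v k a = 0" for a
  proof (induction "total_degree a" arbitrary: a rule: less_induct)
    case less
    then have "mps_mul (v k) (w k j) a = v k a * w k j 0" if "k \<in> I" for k j
      using that by (intro mps_mul_eq_lowest_coeff) blast
    then have "\<forall>j\<in>I. (\<Sum>k\<in>I. w k j 0 * v k a) = 0"
      using assms(2) by (auto simp: mult.commute dest!: fun_cong[where x = a])
    with spec[OF assms(1)[unfolded nondegenerate_2form_def], of "\<lambda>k. v k a"] show ?case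
      by simp
  qed
  then show ?thesis
    by auto
qed

lemma hamiltonian_vector_field_deriv_eq_0:
  assumes "nondegenerate_2form J (mps_d1 g)"
    and "\<forall>k\<in>J. mps_deriv i (g k) = (\<lambda>_. 0)"
    and "\<forall>j\<in>J. (\<lambda>a. (\<Sum>k\<in>J. mps_mul (X k) (mps_d1 g k j) a) + mps_deriv j H a) = (\<lambda>_. 0)"
    and "mps_deriv i H = (\<lambda>_. 0)"
  shows "\<forall>k\<in>J. mps_deriv i (X k) = (\<lambda>_. 0)"
proof (rule nondegenerate_2form_kernel[OF assms(1)], intro ballI ext)
  fix j a
  assume "j \<in> J"
  have "mps_deriv i (mps_d1 g k j) = (\<lambda>_. 0)" if "k \<in> J" for k
    using that \<open>j \<in> J\<close> assms(2) unfolding mps_d1_def mps_deriv_diff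
    by (simp add: mps_diff_def mps_deriv_commute[of i])
  then have "mps_deriv i (mps_add (\<lambda>a. \<Sum>k\<in>J. mps_mul (X k) (mps_d1 g k j) a) (mps_deriv j H)) a
      = (\<Sum>k\<in>J. mps_mul (mps_deriv i (X k)) (mps_d1 g k j) a)"
    using assms(4) unfolding mps_deriv_add mps_deriv_sum mps_deriv_mul
    by (simp add: mps_add_def mps_deriv_commute[of i j])
  moreover have "mps_deriv i (mps_add (\<lambda>a. \<Sum>k\<in>J. mps_mul (X k) (mps_d1 g k j) a) (mps_deriv j H))
      = (\<lambda>_. 0)"
    using assms(3) \<open>j \<in> J\<close> by (simp add: mps_add_def)
  ultimately show "(\<Sum>k\<in>J. mps_mul (mps_deriv i (X k)) (mps_d1 g k j) a) = 0"
    by simp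
qed

lemma lie_deriv_eq_0_imp_deriv_eq_0:
  fixes g X :: "nat \<Rightarrow> 'a::comm_ring_1 mps"
  assumes "finite J" and "i \<notin> J" and I: "I = insert i J"
    and \<alpha>: "\<alpha> = (\<lambda>k. mps_add (mps_d0 P k) (if k \<in> J then g k else mps_const 0))"
    and "nondegenerate_2form J (mps_d1 g)"
    and g_indep: "\<forall>k\<in>J. mps_deriv i (g k) = (\<lambda>_. 0)"
    and lie: "\<forall>j\<in>I. lie_deriv_1form I X \<alpha> j = mps_const 0"
  shows "mps_deriv i (\<lambda>a. \<Sum>k\<in>I. mps_mul (\<alpha> k) (X k) a) = (\<lambda>_. 0)"
    and "\<forall>k\<in>J. mps_deriv i (X k) = (\<lambda>_. 0)"
proof -
  define H where "H = (\<lambda>a. \<Sum>k\<in>I. mps_mul (\<alpha> k) (X k) a)"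
  have d\<alpha>: "mps_d1 \<alpha> k j = (if k \<in> J \<and> j \<in> J then mps_d1 g k j else (\<lambda>_. 0))"
    if "k \<in> I" and "j \<in> I" for k j
    using that g_indep \<open>i \<notin> J\<close> unfolding \<alpha> mps_d1_add_d0 I
    by (auto simp: mps_d1_def mps_diff_def)
  have Cartan: "(\<lambda>a. (\<Sum>k\<in>I. mps_mul (X k) (mps_d1 \<alpha> k j) a) + mps_deriv j H a) = (\<lambda>_. 0)"
    if "j \<in> I" for j
    using lie that unfolding H_def by (auto simp: lie_deriv_1form_Cartan fun_eq_iff)
  show H_indep: "mps_deriv i H = (\<lambda>_. 0)"
    using Cartan[of i] d\<alpha> \<open>i \<notin> J\<close> by (simp add: I)
  have "\<forall>j\<in>J. (\<lambda>a. (\<Sum>k\<in>J. mps_mul (X k) (mps_d1 g k j) a) + mps_deriv j H a) = (\<lambda>_. 0)"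
  proof
    fix j
    assume "j \<in> J"
    then show "(\<lambda>a. (\<Sum>k\<in>J. mps_mul (X k) (mps_d1 g k j) a) + mps_deriv j H a) = (\<lambda>_. 0)"
      using Cartan[of j] d\<alpha> assms(1,2) by (simp add: I)
  qed
  then show "\<forall>k\<in>J. mps_deriv i (X k) = (\<lambda>_. 0)"
    by (rule hamiltonian_vector_field_deriv_eq_0[OF assms(5) g_indep _ H_indep])
qed

section \<open>The potential \<open>\<theta>\<^sup>m - x \<theta>\<close>\<close>

text \<open>The coefficient at \<open>b + d e\<^sub>i\<close> reads \<open>c p(b) = p(b + d e\<^sub>i - e\<^sub>j)\<close>, and the exponent on the
  right has smaller degree in variable \<open>j\<close>.\<close>

lemma mps_mul_monom_diff_var_affine_imp_0:
  fixes p :: "'a::idom mps"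
  assumes "i \<noteq> j" and "2 \<le> d" and "c \<noteq> 0"
    and affine: "\<forall>a. 2 \<le> Poly_Mapping.lookup a i
                   \<longrightarrow> mps_mul (mps_diff (mps_monom (Poly_Mapping.single i d) c) (mps_var j)) p a = 0"
  shows "p = (\<lambda>_. 0)"
proof -
  let ?E = "Poly_Mapping.single i d" and ?e = "Poly_Mapping.single j (1::nat)"
  have step: "p b = 0" if "(\<exists>f. b + ?E = ?e + f) \<Longrightarrow> p (b + ?E - ?e) = 0" for b
  proof -
    have "mps_mul (mps_diff (mps_monom ?E c) (mps_var j)) p (b + ?E)
        = c * p b - (if \<exists>f. b + ?E = ?e + f then p (b + ?E - ?e) else 0)"
      unfolding mps_mul_diff_left mps_var_eq_monom
      by (simp add: mps_diff_def mps_mul_monom_left add.commute[of b])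
    moreover have "mps_mul (mps_diff (mps_monom ?E c) (mps_var j)) p (b + ?E) = 0"
      using affine assms(2) by (simp add: lookup_add)
    ultimately show ?thesis
      using that assms(3) by (auto split: if_splits)
  qed
  have "\<forall>b. Poly_Mapping.lookup b j = t \<longrightarrow> p b = 0" for t
  proof (induction t)
    case 0
    have "b + ?E \<noteq> ?e + f" if "Poly_Mapping.lookup b j = 0" for b f
      using that assms(1) by (auto simp: lookup_add lookup_single dest: arg_cong[of _ _ "\<lambda>a. Poly_Mapping.lookup a j"])
    then show ?case
      using step by blast
  next
    case (Suc t)
    have "Poly_Mapping.lookup (b + ?E - ?e) j = t" if "Poly_Mapping.lookup b j = Suc t" for b
      using that assms(1) by (simp add: lookup_add lookup_minus lookup_single)
    then show ?case
      using step Suc.IH by blast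
  qed
  then show ?thesis
    by blast
qed

definition mps_potential :: "nat \<Rightarrow> nat \<Rightarrow> nat \<Rightarrow> 'a::comm_ring_1 mps" where
  "mps_potential i j m = mps_diff (mps_pow (mps_var i) m) (mps_mul (mps_var j) (mps_var i))"

lemma mps_deriv_potential:
  assumes "i \<noteq> j"
  shows "mps_deriv i (mps_potential i j m)
           = mps_diff (mps_monom (Poly_Mapping.single i (m - 1)) (of_nat m)) (mps_var j)"
proof -
  let ?e = "Poly_Mapping.single j 1 + Poly_Mapping.single i (1::nat)"
  have "i \<in> Poly_Mapping.keys ?e" and "Poly_Mapping.lookup ?e i = 1"
    using assms by (simp_all add: Poly_Mapping.in_keys_iff lookup_add lookup_single)
  then show ?thesis
    unfolding mps_potential_def mps_deriv_diff mps_pow_var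
    unfolding mps_var_eq_monom mps_mul_monom_monom mps_deriv_monom
    by (cases m) (simp_all flip: single_diff)
qed

lemma mps_deriv_deriv_potential:
  assumes "i \<noteq> j" and "k \<noteq> i"
  shows "mps_deriv k (mps_deriv i (mps_potential i j m)) = mps_monom 0 (if k = j then - 1 else 0)"
  using assms unfolding mps_deriv_potential[OF assms(1)]
  unfolding mps_deriv_diff mps_var_eq_monom mps_deriv_monom
  by (auto simp: mps_diff_def mps_monom_def)

lemma mps_potential_contraction_affine_imp_0:
  fixes p :: "'a::{idom, ring_char_0} mps"
  assumes "i \<noteq> j" and "2 < m"
    and "mps_deriv i (mps_deriv i (mps_mul (mps_deriv i (mps_potential i j m)) p)) = (\<lambda>_. 0)"
  shows "p = (\<lambda>_. 0)"
proof (rule mps_mul_monom_diff_var_affine_imp_0)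
  show "i \<noteq> j" and "2 \<le> m - 1" and "of_nat m \<noteq> (0::'a)"
    using assms(1,2) by auto
  show "\<forall>a. 2 \<le> Poly_Mapping.lookup a i \<longrightarrow>
      mps_mul (mps_diff (mps_monom (Poly_Mapping.single i (m - 1)) (of_nat m)) (mps_var j)) p a = 0"
    using assms(3) mps_deriv_deriv_eq_0_imp_coeff_eq_0 unfolding mps_deriv_potential[OF assms(1)]
    by blast
qed

lemma mps_deriv_contraction_potential:
  fixes g X :: "nat \<Rightarrow> 'a::comm_ring_1 mps"
  assumes "finite J" and "i \<notin> J" and "j \<in> J"
    and \<alpha>: "\<alpha> = (\<lambda>k. mps_add (mps_d0 (mps_potential i j m) k) (if k \<in> J then g k else mps_const 0))"
    and g_indep: "\<forall>k\<in>J. mps_deriv i (g k) = (\<lambda>_. 0)"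
    and X_indep: "\<forall>k\<in>J. mps_deriv i (X k) = (\<lambda>_. 0)"
  shows "mps_deriv i (\<lambda>a. \<Sum>k\<in>insert i J. mps_mul (\<alpha> k) (X k) a)
           = mps_diff (mps_deriv i (mps_mul (\<alpha> i) (X i))) (X j)"
proof -
  have "mps_deriv i (mps_mul (\<alpha> k) (X k)) a = (if k = j then - X j a else 0)" if "k \<in> J" for k a
  proof -
    have "k \<noteq> i" and "i \<noteq> j"
      using that assms(2,3) by blast+
    then have "mps_deriv i (\<alpha> k) = mps_monom 0 (if k = j then - 1 else 0)"
      using that g_indep unfolding \<alpha> mps_d0_def mps_deriv_add
      by (auto simp: mps_deriv_commute[of i k] mps_deriv_deriv_potential mps_add_def)
    then show ?thesis
      using X_indep that by (auto simp: mps_deriv_mul mps_add_def mps_mul_monom_left)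
  qed
  then show ?thesis
    unfolding mps_deriv_sum using assms(1-3) by (simp add: mps_diff_def)
qed

theorem lemma5p9:
  fixes m n :: nat and g f :: "nat \<Rightarrow> 'a::field_char_0 mps"
  assumes "m > 2" and "n \<ge> 1"
    and "\<forall>i\<in>{1..2*n}. mps_vars {1..2*n} (g i)"
    and "nondegenerate_2form {1..2*n} (mps_d1 g)"
    and "\<forall>k\<in>{0..2*n}. mps_vars {0..2*n} (f k)"
    and "\<forall>j\<in>{0..2*n}. lie_deriv_1form {0..2*n} f
           (\<lambda>i. mps_add
                  (mps_d0 (mps_diff (mps_pow (mps_var 0) m) (mps_mul (mps_var 1) (mps_var 0))) i)
                  (if i \<in> {1..2*n} then g i else mps_const 0)) j
         = mps_const 0"
  shows "f 0 = mps_const 0 \<and> f 1 = mps_const 0"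
proof -
  define J where "J = {1..2*n}"
  define \<alpha> where "\<alpha> = (\<lambda>k. mps_add (mps_d0 (mps_potential 0 1 m) k) (if k \<in> J then g k else mps_const 0))"
  have J: "{0..2*n} = insert 0 J" "0 \<notin> J" "1 \<in> J" "finite J"
    using assms(2) by (auto simp: J_def)
  have g_indep: "\<forall>k\<in>J. mps_deriv 0 (g k) = (\<lambda>_. 0)"
    using assms(3) by (auto simp: J_def intro: mps_vars_imp_deriv_eq_0)
  have "\<forall>j\<in>{0..2*n}. lie_deriv_1form {0..2*n} f \<alpha> j = mps_const 0"
    using assms(6) unfolding \<alpha>_def mps_potential_def J_def .
  note invariance = lie_deriv_eq_0_imp_deriv_eq_0[OF J(4,2,1) \<alpha>_def assms(4)[folded J_def] g_indep this]
  have "mps_diff (mps_deriv 0 (mps_mul (\<alpha> 0) (f 0))) (f 1) = (\<lambda>_. 0)"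
    using mps_deriv_contraction_potential[OF J(4,2,3) \<alpha>_def g_indep invariance(2)] invariance(1)
    unfolding J(1) by simp
  then have Q: "mps_deriv 0 (mps_mul (\<alpha> 0) (f 0)) = f 1"
    by (auto simp: mps_diff_def fun_eq_iff)
  have \<alpha>0: "\<alpha> 0 = mps_deriv 0 (mps_potential 0 1 m)"
    using J(2) by (simp add: \<alpha>_def mps_d0_def mps_add_def)
  have "f 0 = (\<lambda>_. 0)"
  proof (rule mps_potential_contraction_affine_imp_0)
    show "mps_deriv 0 (mps_deriv 0 (mps_mul (mps_deriv 0 (mps_potential 0 1 m)) (f 0))) = (\<lambda>_. 0)"
      using Q invariance(2) J(3) unfolding \<alpha>0 by simp
  qed (use assms(1) in auto)
  with Q show ?thesis
    by simp
qed

end
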